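(* The orbits of the action $\rho(P,A) = P^T A P$ of $\operatorname{Sp}(4)$ on $S(4,\mathbb{R})$ are exactly the following pairwise distinct sets: (i) for each $p > 0$, $\mathcal{J}_p^{+} = \{\sqrt{p}\,J\}$; (ii) for each $p > 0$, $\mathcal{J}_p^{-} = \{-\sqrt{p}\,J\}$; (iii) for each $p > 0$ and $q \in \mathbb{R}$, $\mathcal{A}_{p,q}^{+} = \{A \in S(4,\mathbb{R}) : A \neq \pm\sqrt{p}\,J,\ \operatorname{Pf}(A) = p,\ \operatorname{s}(A) = q\}$; (iv) for each $p < 0$ and $q \in \mathbb{R}$, $\mathcal{A}_{p,q}^{-} = \{A \in S(4,\mathbb{R}) : \operatorname{Pf}(A) = p,\ \operatorname{s}(A) = q\}$.
   Context: $S(4,\mathbb{R}) = \{A \in M(4,\mathbb{R}) : A^T = -A,\ \det A \neq 0\}$. $J = \operatorname{diag}(J_0,J_0)$ with $J_0 = \begin{bmatrix} 0 & 1 \\ -1 & 0\end{bmatrix}$, and $\operatorname{Sp}(4) = \{P \in M(4,\mathbb{R}) : P^T J P = J\}$. For $A = \begin{bmatrix} 0 & a & b & c \\ -a & 0 & d & e \\ -b & -d & 0 & f \\ -c & -e & -f & 0\end{bmatrix}$, $\operatorname{Pf}(A) = af - be + cd$ and $\operatorname{s}(A) = a + f$. *)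

theory Defs
  imports "HOL-Analysis.Analysis"
begin

(* 4x4 real matrices; indices of type 4 are 0,1,2,3 standing for rows/columns 1,2,3,4 *)
type_synonym mat4 = "real^4^4"

definition S4 :: "mat4 set" where
  "S4 = {A. transpose A = - A \<and> det A \<noteq> 0}"

definition J4 :: mat4 where
  "J4 = (\<chi> i j. if (i = 0 \<and> j = 1) \<or> (i = 2 \<and> j = 3) then 1
                 else if (i = 1 \<and> j = 0) \<or> (i = 3 \<and> j = 2) then -1 else 0)"

definition Sp4 :: "mat4 set" where
  "Sp4 = {P. transpose P ** J4 ** P = J4}"

(* a = A12, b = A13, c = A14, d = A23, e = A24, f = A34 *)
definition Pf :: "mat4 \<Rightarrow> real" where
  "Pf A = A$0$1 * A$2$3 - A$0$2 * A$1$3 + A$0$3 * A$1$2"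

definition strace :: "mat4 \<Rightarrow> real" where
  "strace A = A$0$1 + A$2$3"

definition rho :: "mat4 \<Rightarrow> mat4 \<Rightarrow> mat4" where
  "rho P A = transpose P ** A ** P"

definition orbit :: "mat4 \<Rightarrow> mat4 set" where
  "orbit A = {rho P A | P. P \<in> Sp4}"

datatype orbit_label = JPlus real | JMinus real | APlus real real | AMinus real real

fun valid_label :: "orbit_label \<Rightarrow> bool" where
  "valid_label (JPlus p) = (p > 0)"
| "valid_label (JMinus p) = (p > 0)"
| "valid_label (APlus p q) = (p > 0)"
| "valid_label (AMinus p q) = (p < 0)"

fun orbit_set :: "orbit_label \<Rightarrow> mat4 set" where
  "orbit_set (JPlus p) = {sqrt p *\<^sub>R J4}"
| "orbit_set (JMinus p) = {- (sqrt p *\<^sub>R J4)}"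
| "orbit_set (APlus p q) = {A \<in> S4. A \<noteq> sqrt p *\<^sub>R J4 \<and> A \<noteq> - (sqrt p *\<^sub>R J4)
                                 \<and> Pf A = p \<and> strace A = q}"
| "orbit_set (AMinus p q) = {A \<in> S4. Pf A = p \<and> strace A = q}"

end

theory Submission
  imports Defs
begin

(* The action is best seen on M = J^{-1} A: for skew A it satisfies M^2 - s(A) M + Pf(A) I = 0,
   and P^T A P corresponds to P^{-1} M P. Hence Pf and s are invariants, and the multiples c J,
   whose Pfaffian is c^2 > 0, are fixed points. If A is not a multiple of J, the trace-free part
   K = M - (s/2) I satisfies K^2 = (s^2/4 - Pf) I without being scalar, so some u is not an
   eigenvector of K; completing u, K u to a symplectic basis adapted to K brings A to a normal
   form depending only on (Pf A, s A). So the remaining orbits are the level sets of (Pf, s)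
   minus the fixed points, of which there are none when Pf < 0. *)

lemma exhaust_4_from_0: "i = 0 \<or> i = 1 \<or> i = 2 \<or> i = (3 :: 4)"
  using exhaust_4[of i] by auto

lemma forall_4_from_0: "(\<forall>i :: 4. P i) \<longleftrightarrow> P 0 \<and> P 1 \<and> P 2 \<and> P 3"
  by (metis exhaust_4_from_0)

lemma UNIV_4_from_0: "(UNIV :: 4 set) = {0, 1, 2, 3}"
  using exhaust_4_from_0 by auto

lemma sum_4_from_0: "sum f (UNIV :: 4 set) = f 0 + f 1 + f 2 + f 3"
  unfolding UNIV_4_from_0 by (simp add: ac_simps)

lemma matrix_mul_uminus_left: "(- A) ** B = - (A ** (B :: 'a::ring_1^'n^'m))"
  by (simp add: matrix_matrix_mult_def vec_eq_iff sum_negf)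

lemma matrix_mul_uminus_right: "A ** (- B) = - (A ** (B :: 'a::ring_1^'n^'m))"
  by (simp add: matrix_matrix_mult_def vec_eq_iff sum_negf)

lemma matrix_mul_diff_left: "(A - B) ** C = A ** C - B ** (C :: 'a::ring_1^'n^'m)"
  by (simp add: matrix_matrix_mult_def vec_eq_iff sum_subtractf left_diff_distrib)

lemma matrix_mul_diff_right: "A ** (B - C) = A ** B - A ** (C :: 'a::ring_1^'n^'m)"
  by (simp add: matrix_matrix_mult_def vec_eq_iff sum_subtractf right_diff_distrib)

lemma mat4_mult_nth:
  "((X :: mat4) ** Y) $ i $ j = X$i$0 * Y$0$j + X$i$1 * Y$1$j + X$i$2 * Y$2$j + X$i$3 * Y$3$j"
  by (simp add: matrix_matrix_mult_def sum_4_from_0)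

lemma mat4_mult_vec_nth:
  "((X :: mat4) *v y) $ i = X$i$0 * y$0 + X$i$1 * y$1 + X$i$2 * y$2 + X$i$3 * y$3"
  by (simp add: matrix_vector_mult_def sum_4_from_0)

lemma inner_vec4: "(x :: real^4) \<bullet> y = x$0 * y$0 + x$1 * y$1 + x$2 * y$2 + x$3 * y$3"
  by (simp add: inner_vec_def sum_4_from_0)

section \<open>Skew-symmetric 4 by 4 matrices\<close>

definition skew4 :: "real \<Rightarrow> real \<Rightarrow> real \<Rightarrow> real \<Rightarrow> real \<Rightarrow> real \<Rightarrow> mat4" where
  "skew4 a b c d e f = (\<chi> i j.
     if i = 0 \<and> j = 1 then a else if i = 1 \<and> j = 0 then -a
     else if i = 0 \<and> j = 2 then b else if i = 2 \<and> j = 0 then -b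
     else if i = 0 \<and> j = 3 then c else if i = 3 \<and> j = 0 then -c
     else if i = 1 \<and> j = 2 then d else if i = 2 \<and> j = 1 then -d
     else if i = 1 \<and> j = 3 then e else if i = 3 \<and> j = 1 then -e
     else if i = 2 \<and> j = 3 then f else if i = 3 \<and> j = 2 then -f else 0)"

lemma skew4_nth [simp]:
  "skew4 a b c d e f $0$0 = 0" "skew4 a b c d e f $0$1 = a"
  "skew4 a b c d e f $0$2 = b" "skew4 a b c d e f $0$3 = c"
  "skew4 a b c d e f $1$0 = -a" "skew4 a b c d e f $1$1 = 0"
  "skew4 a b c d e f $1$2 = d" "skew4 a b c d e f $1$3 = e"
  "skew4 a b c d e f $2$0 = -b" "skew4 a b c d e f $2$1 = -d"
  "skew4 a b c d e f $2$2 = 0" "skew4 a b c d e f $2$3 = f"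
  "skew4 a b c d e f $3$0 = -c" "skew4 a b c d e f $3$1 = -e"
  "skew4 a b c d e f $3$2 = -f" "skew4 a b c d e f $3$3 = 0"
  by (simp_all add: skew4_def)

lemma transpose_skew4: "transpose (skew4 a b c d e f) = - skew4 a b c d e f"
  by (simp add: vec_eq_iff forall_4_from_0 transpose_def)

lemma skew4_upper_entries:
  fixes A :: mat4
  assumes "transpose A = - A"
  shows "A = skew4 (A$0$1) (A$0$2) (A$0$3) (A$1$2) (A$1$3) (A$2$3)"
proof -
  have "A$j$i = - A$i$j" for i j
    using arg_cong[OF assms, of "\<lambda>M. M$i$j"] by (simp add: transpose_def)
  from this[of 0 0] this[of 1 1] this[of 2 2] this[of 3 3] this[of 0 1] this[of 0 2] this[of 0 3]
    this[of 1 2] this[of 1 3] this[of 2 3]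
  show ?thesis
    by (simp add: vec_eq_iff forall_4_from_0)
qed

lemma skew4_cases:
  fixes A :: mat4
  assumes "transpose A = - A"
  obtains a b c d e f where "A = skew4 a b c d e f"
  using skew4_upper_entries[OF assms] by blast

lemma skew_eqI:
  fixes A B :: mat4
  assumes "transpose A = - A" "transpose B = - B"
    and "A$0$1 = B$0$1" "A$0$2 = B$0$2" "A$0$3 = B$0$3"
    and "A$1$2 = B$1$2" "A$1$3 = B$1$3" "A$2$3 = B$2$3"
  shows "A = B"
  using skew4_upper_entries[OF assms(1)] skew4_upper_entries[OF assms(2)] assms(3-) by simp

lemma J4_skew4: "J4 = skew4 1 0 0 0 0 1"
  by (simp add: vec_eq_iff forall_4_from_0 J4_def)

lemma transpose_J4: "transpose J4 = - J4"
  by (simp add: J4_skew4 transpose_skew4)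

lemma scaleR_J4: "c *\<^sub>R J4 = skew4 c 0 0 0 0 c"
  by (simp add: vec_eq_iff forall_4_from_0 J4_skew4)

lemma Pf_skew4 [simp]: "Pf (skew4 a b c d e f) = a * f - b * e + c * d"
  by (simp add: Pf_def)

lemma strace_skew4 [simp]: "strace (skew4 a b c d e f) = a + f"
  by (simp add: strace_def)

lemma Pf_scaleR_J4: "Pf (c *\<^sub>R J4) = c\<^sup>2"
  by (simp add: scaleR_J4 power2_eq_square)

lemma J4_neq_zero [simp]: "J4 \<noteq> 0"
  by (metis J4_skew4 skew4_nth(2) zero_index zero_neq_one)

section \<open>The symplectic group and its action\<close>

lemma J4_mult_J4: "J4 ** J4 = - mat 1"
  by (simp add: vec_eq_iff forall_4_from_0 mat4_mult_nth J4_skew4 mat_def)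

definition sp_inv :: "mat4 \<Rightarrow> mat4" where
  "sp_inv P = - (J4 ** transpose P ** J4)"

lemma sp_inv_mult:
  assumes "P \<in> Sp4"
  shows "sp_inv P ** P = mat 1"
proof -
  have "sp_inv P ** P = - (J4 ** (transpose P ** J4 ** P))"
    by (simp add: sp_inv_def matrix_mul_uminus_left matrix_mul_assoc)
  also have "\<dots> = mat 1"
    using assms by (simp add: Sp4_def J4_mult_J4)
  finally show ?thesis .
qed

lemma mult_sp_inv: "P \<in> Sp4 \<Longrightarrow> P ** sp_inv P = mat 1"
  using sp_inv_mult matrix_left_right_inverse by blast

lemma Sp4_mult_J4_transpose:
  assumes "P \<in> Sp4"
  shows "P ** J4 ** transpose P = J4"
proof -
  have "P ** J4 ** transpose P ** J4 = - mat 1"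
    using mult_sp_inv[OF assms]
    by (simp add: sp_inv_def matrix_mul_uminus_right matrix_mul_assoc minus_equation_iff)
  then have "P ** J4 ** transpose P ** (J4 ** J4) = - J4"
    by (simp add: matrix_mul_assoc matrix_mul_uminus_left)
  then show ?thesis
    by (simp add: J4_mult_J4 matrix_mul_uminus_right)
qed

lemma mat_1_in_Sp4: "mat 1 \<in> Sp4"
  by (simp add: Sp4_def)

lemma Sp4_mult:
  assumes "P \<in> Sp4" "Q \<in> Sp4"
  shows "P ** Q \<in> Sp4"
proof -
  have "transpose (P ** Q) ** J4 ** (P ** Q) = transpose Q ** (transpose P ** J4 ** P) ** Q"
    by (simp add: matrix_transpose_mul matrix_mul_assoc)
  then show ?thesis
    using assms by (simp add: Sp4_def)
qed

lemma sp_inv_in_Sp4: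
  assumes "P \<in> Sp4"
  shows "sp_inv P \<in> Sp4"
proof -
  have "transpose (sp_inv P) ** J4 ** sp_inv P
      = transpose (sp_inv P) ** (transpose P ** J4 ** P) ** sp_inv P"
    using assms by (simp add: Sp4_def)
  also have "\<dots> = transpose (P ** sp_inv P) ** J4 ** (P ** sp_inv P)"
    by (simp add: matrix_transpose_mul matrix_mul_assoc)
  finally show ?thesis
    using mult_sp_inv[OF assms] by (simp add: Sp4_def)
qed

lemma rho_mat_1 [simp]: "rho (mat 1) A = A"
  by (simp add: rho_def)

lemma rho_rho: "rho Q (rho P A) = rho (P ** Q) A"
  by (simp add: rho_def matrix_transpose_mul matrix_mul_assoc)

lemma rho_sp_inv: "P \<in> Sp4 \<Longrightarrow> rho (sp_inv P) (rho P A) = A"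
  by (simp add: rho_rho mult_sp_inv)

lemma rho_scaleR_J4: "P \<in> Sp4 \<Longrightarrow> rho P (c *\<^sub>R J4) = c *\<^sub>R J4"
  by (simp add: rho_def Sp4_def matrix_scalar_ac scalar_matrix_assoc[symmetric])

lemma transpose_rho: "transpose A = - A \<Longrightarrow> transpose (rho P A) = - rho P A"
  by (simp add: rho_def matrix_transpose_mul matrix_mul_assoc
      matrix_mul_uminus_left matrix_mul_uminus_right)

definition pf_adj :: "mat4 \<Rightarrow> mat4" where
  "pf_adj A = skew4 (- A$2$3) (A$1$3) (- A$1$2) (- A$0$3) (A$0$2) (- A$0$1)"

lemma mult_pf_adj:
  assumes "transpose A = - A"
  shows "A ** pf_adj A = Pf A *\<^sub>R mat 1"
proof -
  obtain a b c d e f where A: "A = skew4 a b c d e f"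
    using skew4_cases[OF assms] .
  show ?thesis
    unfolding A by (simp add: vec_eq_iff forall_4_from_0 pf_adj_def mat4_mult_nth mat_def
        algebra_simps)
qed

lemma S4_iff_Pf: "A \<in> S4 \<longleftrightarrow> transpose A = - A \<and> Pf A \<noteq> 0"
proof (cases "transpose A = - A")
  case skew: True
  have "det A \<noteq> 0 \<longleftrightarrow> Pf A \<noteq> 0"
  proof
    assume "Pf A \<noteq> 0"
    then have "A ** ((1 / Pf A) *\<^sub>R pf_adj A) = mat 1"
      using mult_pf_adj[OF skew] by (simp add: matrix_scalar_ac scalar_matrix_assoc[symmetric])
    then show "det A \<noteq> 0"
      using invertible_det_nz invertible_right_inverse by blast
  next
    assume "det A \<noteq> 0"
    then obtain B where B: "B ** A = mat 1"
      using invertible_det_nz invertible_left_inverse by blast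
    show "Pf A \<noteq> 0"
    proof
      assume "Pf A = 0"
      have "pf_adj A = B ** (A ** pf_adj A)"
        by (simp add: matrix_mul_assoc B)
      then have "pf_adj A = 0"
        using mult_pf_adj[OF skew] \<open>Pf A = 0\<close> by simp
      then have "A = 0"
        by (subst skew4_upper_entries[OF skew]) (simp add: vec_eq_iff forall_4_from_0 pf_adj_def)
      then show False
        using \<open>det A \<noteq> 0\<close> by (metis det_0 mat_0)
    qed
  qed
  then show ?thesis
    using skew by (simp add: S4_def)
qed (simp add: S4_def)

section \<open>Invariants of the action\<close>

(* J^{-1} A, as J^{-1} = - J *)
definition endo :: "mat4 \<Rightarrow> mat4" where
  "endo A = - (J4 ** A)"

lemma endo_quadratic:
  assumes "transpose A = - A"
  shows "endo A ** endo A - strace A *\<^sub>R endo A = - (Pf A *\<^sub>R mat 1)"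
proof -
  obtain a b c d e f where A: "A = skew4 a b c d e f"
    using skew4_cases[OF assms] .
  show ?thesis
    unfolding A by (simp add: vec_eq_iff forall_4_from_0 mat4_mult_nth J4_skew4 mat_def endo_def
        algebra_simps)
qed

lemma trace_endo:
  assumes "transpose A = - A"
  shows "trace (endo A) = 2 * strace A"
proof -
  obtain a b c d e f where A: "A = skew4 a b c d e f"
    using skew4_cases[OF assms] .
  show ?thesis
    unfolding A by (simp add: trace_def sum_4_from_0 endo_def mat4_mult_nth J4_skew4)
qed

lemma endo_rho:
  assumes "P \<in> Sp4"
  shows "endo (rho P A) = sp_inv P ** endo A ** P"
proof -
  have "P ** endo (rho P A) = - ((P ** J4 ** transpose P) ** A ** P)"
    by (simp add: endo_def rho_def matrix_mul_uminus_right matrix_mul_assoc)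
  also have "\<dots> = endo A ** P"
    using Sp4_mult_J4_transpose[OF assms] by (simp add: endo_def matrix_mul_uminus_left)
  finally have "sp_inv P ** (P ** endo (rho P A)) = sp_inv P ** endo A ** P"
    by (simp add: matrix_mul_assoc)
  then show ?thesis
    by (simp add: matrix_mul_assoc sp_inv_mult[OF assms])
qed

lemma strace_rho:
  assumes "P \<in> Sp4" "transpose A = - A"
  shows "strace (rho P A) = strace A"
proof -
  have "trace (endo (rho P A)) = trace (sp_inv P ** (endo A ** P))"
    by (simp add: endo_rho[OF assms(1)] matrix_mul_assoc)
  also have "\<dots> = trace (endo A ** P ** sp_inv P)"
    by (rule trace_mul_sym)
  also have "\<dots> = trace (endo A ** (P ** sp_inv P))"
    by (simp add: matrix_mul_assoc)
  also have "\<dots> = trace (endo A)"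
    by (simp add: mult_sp_inv[OF assms(1)])
  finally show ?thesis
    using trace_endo[OF assms(2)] trace_endo[OF transpose_rho[OF assms(2)]] by simp
qed

lemma Pf_rho:
  assumes "P \<in> Sp4" "transpose A = - A"
  shows "Pf (rho P A) = Pf A"
proof -
  let ?M = "endo A" and ?s = "strace A"
  have "endo (rho P A) ** endo (rho P A) = sp_inv P ** (?M ** ?M) ** P"
    by (simp add: endo_rho[OF assms(1)] matrix_mul_assoc)
      (simp add: mult_sp_inv[OF assms(1)] flip: matrix_mul_assoc)
  then have "- (Pf (rho P A) *\<^sub>R mat 1) = sp_inv P ** (?M ** ?M - ?s *\<^sub>R ?M) ** P"
    using endo_quadratic[OF transpose_rho[OF assms(2)], of P] strace_rho[OF assms]
    by (simp add: endo_rho[OF assms(1)] matrix_mul_diff_left matrix_mul_diff_right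
        matrix_scalar_ac scalar_matrix_assoc[symmetric])
  also have "\<dots> = - (Pf A *\<^sub>R mat 1)"
    by (simp add: endo_quadratic[OF assms(2)] matrix_mul_uminus_left matrix_mul_uminus_right
        matrix_scalar_ac scalar_matrix_assoc[symmetric] sp_inv_mult[OF assms(1)])
  finally have "Pf (rho P A) *\<^sub>R (mat 1 :: mat4) = Pf A *\<^sub>R mat 1"
    by simp
  from arg_cong[OF this, of "\<lambda>M. M $ 0 $ 0"] show ?thesis
    by (simp add: mat_def)
qed

lemma rho_in_S4: "P \<in> Sp4 \<Longrightarrow> A \<in> S4 \<Longrightarrow> rho P A \<in> S4"
  by (simp add: S4_iff_Pf transpose_rho Pf_rho)

lemma orbit_refl: "A \<in> orbit A"
  unfolding orbit_def using mat_1_in_Sp4 by force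

lemma orbit_sym:
  assumes "B \<in> orbit A"
  shows "A \<in> orbit B"
proof -
  obtain P where "P \<in> Sp4" "B = rho P A"
    using assms by (auto simp: orbit_def)
  then have "sp_inv P \<in> Sp4" "A = rho (sp_inv P) B"
    by (simp_all add: sp_inv_in_Sp4 rho_sp_inv)
  then show ?thesis
    unfolding orbit_def by blast
qed

lemma orbit_trans:
  assumes "B \<in> orbit A" "C \<in> orbit B"
  shows "C \<in> orbit A"
proof -
  obtain P Q where "P \<in> Sp4" "B = rho P A" "Q \<in> Sp4" "C = rho Q B"
    using assms by (auto simp: orbit_def)
  then have "P ** Q \<in> Sp4" "C = rho (P ** Q) A"
    by (simp_all add: Sp4_mult rho_rho)
  then show ?thesis
    unfolding orbit_def by blast
qed

lemma orbit_eq: "B \<in> orbit A \<Longrightarrow> orbit B = orbit A"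
  using orbit_sym orbit_trans by blast

lemma orbit_scaleR_J4: "orbit (c *\<^sub>R J4) = {c *\<^sub>R J4}"
  using orbit_refl[of "c *\<^sub>R J4"] by (auto simp: orbit_def rho_scaleR_J4)

section \<open>Normal form\<close>

definition traceless_endo :: "mat4 \<Rightarrow> mat4" where
  "traceless_endo A = endo A - (strace A / 2) *\<^sub>R mat 1"

definition traceless_part :: "mat4 \<Rightarrow> mat4" where
  "traceless_part A = A - (strace A / 2) *\<^sub>R J4"

lemma J4_mult_traceless_endo:
  assumes "transpose A = - A"
  shows "J4 ** traceless_endo A = traceless_part A"
proof -
  obtain a b c d e f where A: "A = skew4 a b c d e f"
    using skew4_cases[OF assms] .
  show ?thesis
    unfolding A by (simp add: vec_eq_iff forall_4_from_0 mat4_mult_nth J4_skew4 mat_def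
        traceless_endo_def traceless_part_def endo_def field_simps)
qed

lemma transpose_traceless_endo_mult_J4:
  assumes "transpose A = - A"
  shows "transpose (traceless_endo A) ** J4 = traceless_part A"
proof -
  obtain a b c d e f where A: "A = skew4 a b c d e f"
    using skew4_cases[OF assms] .
  show ?thesis
    unfolding A by (simp add: vec_eq_iff forall_4_from_0 mat4_mult_nth J4_skew4 mat_def
        traceless_endo_def traceless_part_def endo_def transpose_def field_simps)
qed

lemma traceless_endo_square:
  assumes "transpose A = - A"
  shows "traceless_endo A ** traceless_endo A = ((strace A / 2)\<^sup>2 - Pf A) *\<^sub>R mat 1"
proof -
  obtain a b c d e f where A: "A = skew4 a b c d e f"
    using skew4_cases[OF assms] .
  show ?thesis
    unfolding A by (simp add: vec_eq_iff forall_4_from_0 mat4_mult_nth J4_skew4 mat_def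
        traceless_endo_def endo_def power2_eq_square field_simps)
qed

definition form :: "mat4 \<Rightarrow> real^4 \<Rightarrow> real^4 \<Rightarrow> real" where
  "form S x y = x \<bullet> (S *v y)"

lemma form_add_left [simp]: "form S (x + y) z = form S x z + form S y z"
  and form_add_right [simp]: "form S z (x + y) = form S z x + form S z y"
  and form_diff_left [simp]: "form S (x - y) z = form S x z - form S y z"
  and form_diff_right [simp]: "form S z (x - y) = form S z x - form S z y"
  and form_scaleR_left [simp]: "form S (c *\<^sub>R x) z = c * form S x z"
  and form_scaleR_right [simp]: "form S z (c *\<^sub>R x) = c * form S z x"
  by (simp_all add: form_def inner_add_left inner_add_right inner_diff_left inner_diff_right
      matrix_vector_right_distrib matrix_vector_mult_diff_distrib matrix_vector_mult_scaleR)

lemma form_traceless_part: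
  "form (traceless_part A) x y = form A x y - strace A / 2 * form J4 x y"
  by (simp add: form_def traceless_part_def matrix_vector_mult_diff_rdistrib inner_diff_right
      flip: scaleR_matrix_vector_assoc)

lemma form_mult_right: "form S x (T *v y) = form (S ** T) x y"
  by (simp add: form_def matrix_vector_mul_assoc)

lemma form_mult_left: "form S (T *v x) y = form (transpose T ** S) x y"
  by (simp add: form_def inner_vec4 mat4_mult_vec_nth mat4_mult_nth transpose_def algebra_simps)

lemma form_antisym:
  assumes "transpose S = - S"
  shows "form S x y = - form S y x"
proof -
  obtain a b c d e f where S: "S = skew4 a b c d e f"
    using skew4_cases[OF assms] .
  show ?thesis
    unfolding S by (simp add: form_def inner_vec4 mat4_mult_vec_nth algebra_simps)
qed

lemma form_J4_neg_J4: "form J4 x (- (J4 *v w)) = x \<bullet> w"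
  by (simp add: form_def inner_vec4 mat4_mult_vec_nth J4_skew4)

lemma rho_columns_nth: "rho (\<chi> i j. w j $ i) S $ i $ j = form S (w i) (w j)"
  by (simp add: rho_def form_def mat4_mult_nth mat4_mult_vec_nth inner_vec4 transpose_def
      algebra_simps)

(* By Cauchy-Schwarz, gram_det u v = 0 iff u and v are linearly dependent. *)
definition gram_det :: "'a::real_inner \<Rightarrow> 'a \<Rightarrow> real" where
  "gram_det u v = (u \<bullet> u) * (v \<bullet> v) - (u \<bullet> v)\<^sup>2"

lemma exists_biorthogonal:
  assumes "gram_det u v \<noteq> 0"
  obtains y z where "u \<bullet> y = 1" "v \<bullet> y = 0" "u \<bullet> z = 0" "v \<bullet> z = 1"
proof -
  define y where "y = (v \<bullet> v) *\<^sub>R u - (u \<bullet> v) *\<^sub>R v"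
  define z where "z = (u \<bullet> u) *\<^sub>R v - (u \<bullet> v) *\<^sub>R u"
  have "u \<bullet> y = gram_det u v" "v \<bullet> y = 0" "u \<bullet> z = 0" "v \<bullet> z = gram_det u v"
    by (simp_all add: gram_det_def y_def z_def inner_diff_right inner_commute power2_eq_square)
  then show ?thesis
    using that[of "(1 / gram_det u v) *\<^sub>R y" "(1 / gram_det u v) *\<^sub>R z"] assms by simp
qed

lemma exists_J4_dual_pair:
  assumes "gram_det u v \<noteq> 0"
  obtains y z where "form J4 u y = 1" "form J4 v y = 0" "form J4 u z = 0" "form J4 v z = 1"
proof -
  obtain y z where "u \<bullet> y = 1" "v \<bullet> y = 0" "u \<bullet> z = 0" "v \<bullet> z = 1"
    using exists_biorthogonal[OF assms] .
  then show ?thesis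
    using that[of "- (J4 *v y)" "- (J4 *v z)"] by (simp add: form_J4_neg_J4)
qed

lemma exists_non_eigenvector:
  assumes skew: "transpose A = - A" and not_scalar: "\<forall>c. A \<noteq> c *\<^sub>R J4"
  shows "\<exists>u. gram_det u (traceless_endo A *v u) \<noteq> 0"
proof (rule ccontr)
  obtain a b c d e f where A: "A = skew4 a b c d e f"
    using skew4_cases[OF skew] .
  let ?gram = "\<lambda>u. gram_det u (traceless_endo A *v u)"
  have gram_e0: "?gram (axis 0 1) = b\<^sup>2 + c\<^sup>2"
    and gram_e1: "?gram (axis 1 1) = d\<^sup>2 + e\<^sup>2"
    and gram_e02: "?gram (axis 0 1 + axis 2 1) =
      2 * (((a - f) / 2 - d)\<^sup>2 + 2 * b\<^sup>2 + (c - (a - f) / 2)\<^sup>2) - (c - d)\<^sup>2"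
    unfolding A by (simp_all add: gram_det_def traceless_endo_def endo_def inner_vec4
        mat4_mult_vec_nth mat4_mult_nth J4_skew4 mat_def axis_def power2_eq_square field_simps)
  assume "\<nexists>u. ?gram u \<noteq> 0"
  then have "?gram (axis 0 1) = 0" "?gram (axis 1 1) = 0" "?gram (axis 0 1 + axis 2 1) = 0"
    by blast+
  then have "b = 0" "c = 0" "d = 0" "e = 0" and "(a - f)\<^sup>2 = 0"
    unfolding gram_e0 gram_e1 gram_e02 by (simp_all add: sum_power2_eq_zero_iff power_divide)
  then show False
    using not_scalar[rule_format, of a] by (simp add: A scaleR_J4)
qed

definition symplectic_frame :: "(4 \<Rightarrow> real^4) \<Rightarrow> bool" where
  "symplectic_frame w \<longleftrightarrow>
     form J4 (w 0) (w 1) = 1 \<and> form J4 (w 0) (w 2) = 0 \<and> form J4 (w 0) (w 3) = 0 \<and>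
     form J4 (w 1) (w 2) = 0 \<and> form J4 (w 1) (w 3) = 0 \<and> form J4 (w 2) (w 3) = 1"

definition adapted_frame :: "mat4 \<Rightarrow> (4 \<Rightarrow> real^4) \<Rightarrow> bool" where
  "adapted_frame A w \<longleftrightarrow> symplectic_frame w \<and>
     form (traceless_part A) (w 0) (w 1) = 0 \<and> form (traceless_part A) (w 0) (w 2) = 0 \<and>
     form (traceless_part A) (w 0) (w 3) = 1 \<and> form (traceless_part A) (w 1) (w 3) = 0 \<and>
     form (traceless_part A) (w 2) (w 3) = 0 \<and>
     form (traceless_part A) (w 1) (w 2) = Pf A - (strace A / 2)\<^sup>2"

lemma exists_adapted_frame:
  assumes skew: "transpose A = - A" and gram: "gram_det u (traceless_endo A *v u) \<noteq> 0"
  shows "\<exists>w. adapted_frame A w"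
proof -
  define K where "K = traceless_endo A"
  define B where "B = traceless_part A"
  define v where "v = K *v u"
  have J4_K: "form J4 x (K *v y) = form B x y" for x y
    by (simp add: form_mult_right K_def B_def J4_mult_traceless_endo[OF skew])
  have K_J4: "form J4 (K *v x) y = form B x y" for x y
    by (simp add: form_mult_left K_def B_def transpose_traceless_endo_mult_J4[OF skew])
  have B_antisym: "form B x y = - form B y x" for x y
    by (metis J4_K K_J4 form_antisym transpose_J4)
  have KK: "K *v (K *v x) = ((strace A / 2)\<^sup>2 - Pf A) *\<^sub>R x" for x
    by (simp add: matrix_vector_mul_assoc K_def traceless_endo_square[OF skew]
        flip: scaleR_matrix_vector_assoc)
  obtain y z where uy: "form J4 u y = 1" and vy: "form J4 v y = 0"
    and uz: "form J4 u z = 0" and vz: "form J4 v z = 1"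
    using exists_J4_dual_pair gram unfolding v_def K_def by blast
  have uu: "form J4 u u = 0" "form B u u = 0"
    using form_antisym[OF transpose_J4, of u u] B_antisym[of u u] by simp_all
  have uv: "form J4 u v = 0"
    using uu by (simp add: v_def J4_K)
  have J4_swapped: "form J4 y u = -1" "form J4 v u = 0" "form J4 y v = 0"
    using form_antisym[OF transpose_J4] uy uv vy by (metis neg_equal_0_iff_equal)+
  have B_u: "form B u y = 0" "form B u z = 1" "form B u v = 0" "form B y u = 0"
    using vy vz form_antisym[OF transpose_J4, of v v] B_antisym[of y u]
    by (simp_all flip: K_J4 add: v_def)
  have B_v: "form B x v = ((strace A / 2)\<^sup>2 - Pf A) * form J4 x u"
    "form B v x = ((strace A / 2)\<^sup>2 - Pf A) * form J4 u x" for x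
    by (simp add: v_def KK flip: J4_K) (simp add: v_def KK flip: K_J4)
  \<comment> \<open>the correction terms make the \<open>(1, 3)\<close> entries of \<open>J4\<close> and \<open>B\<close> vanish\<close>
  define w where "w j = (if j = 0 then u else if j = 1 then y - form B y z *\<^sub>R u
    else if j = 2 then v else z + form J4 y z *\<^sub>R u)" for j :: 4
  have w: "w 0 = u" "w 1 = y - form B y z *\<^sub>R u" "w 2 = v" "w 3 = z + form J4 y z *\<^sub>R u"
    by (simp_all add: w_def)
  show ?thesis
    unfolding adapted_frame_def symplectic_frame_def
    by (intro exI[of _ w]) (simp add: w uy uz vz uu uv J4_swapped B_u B_v flip: B_def)
qed

lemma columns_in_Sp4:
  assumes "symplectic_frame w"
  shows "(\<chi> i j. w j $ i) \<in> Sp4"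
proof -
  have "rho (\<chi> i j. w j $ i) J4 = J4"
    by (rule skew_eqI) (simp_all add: transpose_rho transpose_J4 rho_columns_nth
        assms[unfolded symplectic_frame_def], simp_all add: J4_skew4)
  then show ?thesis
    by (simp add: Sp4_def rho_def)
qed

definition normal_form :: "real \<Rightarrow> real \<Rightarrow> mat4" where
  "normal_form p q = skew4 (q / 2) 0 1 (p - q\<^sup>2 / 4) 0 (q / 2)"

lemma rho_adapted_frame:
  assumes skew: "transpose A = - A" and frame: "adapted_frame A w"
  shows "rho (\<chi> i j. w j $ i) A = normal_form (Pf A) (strace A)"
proof -
  have A_form: "form A x y = form (traceless_part A) x y + strace A / 2 * form J4 x y" for x y
    by (simp add: form_traceless_part)
  show ?thesis
    by (rule skew_eqI) (simp_all add: transpose_rho skew normal_form_def transpose_skew4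
        rho_columns_nth A_form frame[unfolded adapted_frame_def symplectic_frame_def] power_divide)
qed

lemma normal_form_reachable:
  assumes "transpose A = - A" "\<forall>c. A \<noteq> c *\<^sub>R J4"
  shows "\<exists>Q\<in>Sp4. rho Q A = normal_form (Pf A) (strace A)"
proof -
  obtain w where "adapted_frame A w"
    using exists_non_eigenvector[OF assms] exists_adapted_frame[OF assms(1)] by blast
  then show ?thesis
    using columns_in_Sp4 rho_adapted_frame[OF assms(1)] adapted_frame_def by blast
qed

lemma Pf_normal_form [simp]: "Pf (normal_form p q) = p"
  by (simp add: normal_form_def power2_eq_square)

lemma strace_normal_form [simp]: "strace (normal_form p q) = q"
  by (simp add: normal_form_def)

lemma transpose_normal_form: "transpose (normal_form p q) = - normal_form p q"
  by (simp add: normal_form_def transpose_skew4)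

lemma normal_form_in_S4: "p \<noteq> 0 \<Longrightarrow> normal_form p q \<in> S4"
  by (simp add: S4_iff_Pf transpose_normal_form)

lemma normal_form_not_scalar: "normal_form p q \<noteq> c *\<^sub>R J4"
  by (metis normal_form_def scaleR_J4 skew4_nth(4) zero_neq_one)

lemma orbit_normal_form:
  assumes "p \<noteq> 0"
  shows "orbit (normal_form p q) = {A \<in> S4. (\<forall>c. A \<noteq> c *\<^sub>R J4) \<and> Pf A = p \<and> strace A = q}"
    (is "_ = ?S")
proof (intro set_eqI iffI)
  fix A
  assume "A \<in> orbit (normal_form p q)"
  then obtain P where P: "P \<in> Sp4" and A: "A = rho P (normal_form p q)"
    by (auto simp: orbit_def)
  have "A \<noteq> c *\<^sub>R J4" for c
  proof
    assume "A = c *\<^sub>R J4"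
    then have "normal_form p q \<in> orbit (c *\<^sub>R J4)"
      using orbit_sym \<open>A \<in> orbit (normal_form p q)\<close> by blast
    then show False
      using normal_form_not_scalar by (simp add: orbit_scaleR_J4)
  qed
  moreover have "A \<in> S4"
    unfolding A using P normal_form_in_S4[OF assms] by (rule rho_in_S4)
  ultimately show "A \<in> ?S"
    by (simp add: A P Pf_rho strace_rho transpose_normal_form)
next
  fix A
  assume "A \<in> ?S"
  then obtain Q where "Q \<in> Sp4" "rho Q A = normal_form p q"
    using normal_form_reachable[of A] by (auto simp: S4_iff_Pf)
  then have "normal_form p q \<in> orbit A"
    unfolding orbit_def by force
  then show "A \<in> orbit (normal_form p q)"
    by (rule orbit_sym)
qed

lemma not_scalar_if_Pf_neg: "Pf A < 0 \<Longrightarrow> A \<noteq> c *\<^sub>R J4"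
  by (metis Pf_scaleR_J4 not_less zero_le_power2)

lemma not_scalar_iff_Pf_pos:
  assumes "Pf A = p" "0 < p"
  shows "(\<forall>c. A \<noteq> c *\<^sub>R J4) \<longleftrightarrow> A \<noteq> sqrt p *\<^sub>R J4 \<and> A \<noteq> - (sqrt p *\<^sub>R J4)"
proof -
  have "A = sqrt p *\<^sub>R J4 \<or> A = (- sqrt p) *\<^sub>R J4" if "A = c *\<^sub>R J4" for c
  proof -
    have "p = c\<^sup>2"
      using assms that by (simp add: Pf_scaleR_J4)
    then have "c = sqrt p \<or> c = - sqrt p"
      by (auto simp: abs_if)
    then show ?thesis
      using that by auto
  qed
  then show ?thesis
    by (metis scaleR_minus_left)
qed

fun label_rep :: "orbit_label \<Rightarrow> mat4" where
  "label_rep (JPlus p) = sqrt p *\<^sub>R J4"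
| "label_rep (JMinus p) = - (sqrt p *\<^sub>R J4)"
| "label_rep (APlus p q) = normal_form p q"
| "label_rep (AMinus p q) = normal_form p q"

lemma scaleR_J4_in_S4: "c \<noteq> 0 \<Longrightarrow> c *\<^sub>R J4 \<in> S4"
  by (simp add: S4_iff_Pf Pf_scaleR_J4 transpose_scalar transpose_J4)

lemma orbit_set_eq_orbit:
  assumes "valid_label l"
  shows "label_rep l \<in> S4 \<and> orbit_set l = orbit (label_rep l)"
proof (cases l)
  case (JPlus p)
  then show ?thesis
    using assms orbit_scaleR_J4 scaleR_J4_in_S4 by simp
next
  case (JMinus p)
  then show ?thesis
    using assms orbit_scaleR_J4[of "- sqrt p"] scaleR_J4_in_S4[of "- sqrt p"] by simp
next
  case (APlus p q)
  then show ?thesis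
    using assms not_scalar_iff_Pf_pos by (auto simp: orbit_normal_form normal_form_in_S4)
next
  case (AMinus p q)
  then show ?thesis
    using assms not_scalar_if_Pf_neg by (auto simp: orbit_normal_form normal_form_in_S4)
qed

definition label_of :: "mat4 \<Rightarrow> orbit_label" where
  "label_of A = (if Pf A < 0 then AMinus (Pf A) (strace A)
     else if A = sqrt (Pf A) *\<^sub>R J4 then JPlus (Pf A)
     else if A = - (sqrt (Pf A) *\<^sub>R J4) then JMinus (Pf A)
     else APlus (Pf A) (strace A))"

lemma label_of_in_orbit_set:
  assumes "A \<in> S4"
  shows "valid_label (label_of A) \<and> A \<in> orbit_set (label_of A)"
  using assms by (auto simp: label_of_def S4_iff_Pf)

lemma label_of_eq:
  assumes "valid_label l" "A \<in> orbit_set l"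
  shows "label_of A = l"
proof (cases l)
  case (JPlus p)
  then show ?thesis
    using assms by (simp add: label_of_def Pf_scaleR_J4)
next
  case (JMinus p)
  then have "A \<noteq> sqrt p *\<^sub>R J4"
    using assms by (simp flip: scaleR_minus_left)
  then show ?thesis
    using assms JMinus Pf_scaleR_J4[of "- sqrt p"] by (simp add: label_of_def)
qed (use assms in \<open>auto simp: label_of_def\<close>)

lemma label_rep_in_orbit_set:
  assumes "valid_label l"
  shows "label_rep l \<in> orbit_set l"
  using orbit_set_eq_orbit[OF assms] orbit_refl[of "label_rep l"] by simp

lemma orbit_eq_orbit_set_label_of:
  assumes "A \<in> S4"
  shows "orbit A = orbit_set (label_of A)"
proof -
  have l: "valid_label (label_of A)" "A \<in> orbit_set (label_of A)"
    using label_of_in_orbit_set[OF assms] by simp_all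
  then show ?thesis
    using orbit_set_eq_orbit[OF l(1)] orbit_eq by simp
qed

theorem theorem2p2:
  shows "{orbit A | A. A \<in> S4} = orbit_set ` {l. valid_label l}
         \<and> inj_on orbit_set {l. valid_label l}"
proof
  show "{orbit A | A. A \<in> S4} = orbit_set ` {l. valid_label l}"
  proof (intro set_eqI iffI)
    fix X
    assume "X \<in> {orbit A | A. A \<in> S4}"
    then show "X \<in> orbit_set ` {l. valid_label l}"
      using orbit_eq_orbit_set_label_of label_of_in_orbit_set by blast
  next
    fix X
    assume "X \<in> orbit_set ` {l. valid_label l}"
    then show "X \<in> {orbit A | A. A \<in> S4}"
      using orbit_set_eq_orbit by blast
  qed
  show "inj_on orbit_set {l. valid_label l}"
  proof (rule inj_onI)
    fix l l'
    assume l: "l \<in> {l. valid_label l}" and l': "l' \<in> {l. valid_label l}"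
      and eq: "orbit_set l = orbit_set l'"
    have "label_of (label_rep l) = l"
      using label_of_eq label_rep_in_orbit_set l by simp
    moreover have "label_of (label_rep l) = l'"
      using label_of_eq[of l'] label_rep_in_orbit_set[of l] l l' eq by simp
    ultimately show "l = l'"
      by simp
  qed
qed

end
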